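(* Let $0\le\mu<L<+\infty$, $N\ge1$, $R>0$, let $H=\{h_{i,k}\}$ define a fixed-step method with $N$ steps such that $h_{i,i-1}\neq0$ for all $i\in\{1,\dots,N\}$, and let $b\in\mathbb{R}^{N+1}$, $C\in\mathbb{S}^{N+2}$. Then the optimal value of the dual problem $$\inf_{\{\lambda_{ij}\}_{i,j\in I},\ \tau}\ \tau R^2\quad\text{s.t.}\quad \tau A_R-C+\sum_{i,j\in I}\lambda_{ij}A_{ij}\succeq0,\quad b-\sum_{i,j\in I}\lambda_{ij}(v_j-v_i)=0,\quad \lambda_{ij}\ge0\ (i,j\in I),\quad \tau\ge0$$ is attained and equal to $w^{sdp}_{\mu,L}(R,H,N,b,C)$.
   Context: Fixed-step method with $N$ steps: scalars $h_{i,k}$ for $1\le i\le N$, $0\le k\le N-1$, with $h_{i,k}=0$ for $k\ge i$ (a lower-triangular $H\in\mathbb{R}^{N\times N}$); iterates are $x_i=x_0-\sum_{k=0}^{i-1}h_{i,k}g_k$ with $g_k$ the gradient at $x_k$. Let $I=\{0,1,\dots,N,*\}$ and $e_1,\dots,e_{N+2}$ the standard basis of $\mathbb{R}^{N+2}$. For $i=0,\dots,N$ let $h_i=(-h_{i,0},\dots,-h_{i,i-1},0,\dots,0,1)^{\top}\in\mathbb{R}^{N+2}$ (last entry $1$) and $u_i=e_{i+1}$; let $h_*=u_*=0$. For $i,j\in I$ define the symmetric matrix $A_{ij}$ by $2A_{ij}=\frac{L}{L-\mu}\big(u_j(h_i-h_j)^{\top}+(h_i-h_j)u_j^{\top}\big)+\frac{1}{L-\mu}(u_i-u_j)(u_i-u_j)^{\top}+\frac{\mu}{L-\mu}\big(u_i(h_j-h_i)^{\top}+(h_j-h_i)u_i^{\top}\big)+\frac{L\mu}{L-\mu}(h_i-h_j)(h_i-h_j)^{\top}$,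 and $A_R=e_{N+2}e_{N+2}^{\top}$. For the function-value variables, let $v_i$ be the $(i+1)$-th standard basis vector of $\mathbb{R}^{N+1}$ for $i=0,\dots,N$ and $v_*=0$. The primal value $w^{sdp}_{\mu,L}(R,H,N,b,C)$ is the supremum of $b^{\top}f+\mathrm{Tr}(CG)$ over $G\in\mathbb{S}^{N+2}$ (symmetric matrices), $f=(f_0,\dots,f_N)\in\mathbb{R}^{N+1}$ subject to $f_j-f_i+\mathrm{Tr}(GA_{ij})\le0$ for all $i,j\in I$ (with $f_*:=0$), $\mathrm{Tr}(GA_R)\le R^2$, and $G\succeq0$. *)

theory Defs
  imports "HOL-Analysis.Analysis"
begin

(* Matrices of size n x n are represented as functions nat => nat => real,
   with only the entries with indices < n relevant (0-based indexing).
   Vectors of length n are functions nat => real (indices < n). *)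

definition sym_mat :: "nat \<Rightarrow> (nat \<Rightarrow> nat \<Rightarrow> real) \<Rightarrow> bool" where
  "sym_mat n M \<longleftrightarrow> (\<forall>i<n. \<forall>j<n. M i j = M j i)"

definition psd :: "nat \<Rightarrow> (nat \<Rightarrow> nat \<Rightarrow> real) \<Rightarrow> bool" where
  "psd n M \<longleftrightarrow> sym_mat n M \<and>
     (\<forall>x :: nat \<Rightarrow> real. 0 \<le> (\<Sum>i<n. \<Sum>j<n. x i * M i j * x j))"

definition trace_prod :: "nat \<Rightarrow> (nat \<Rightarrow> nat \<Rightarrow> real) \<Rightarrow> (nat \<Rightarrow> nat \<Rightarrow> real) \<Rightarrow> real" where
  "trace_prod n M P = (\<Sum>k<n. \<Sum>l<n. M k l * P l k)"

definition outer :: "(nat \<Rightarrow> real) \<Rightarrow> (nat \<Rightarrow> real) \<Rightarrow> nat \<Rightarrow> nat \<Rightarrow> real" where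
  "outer x y = (\<lambda>k l. x k * y l)"

(* Index set I = {0,...,N,*}: Some i stands for i (0 <= i <= N), None stands for *. *)
definition idx :: "nat \<Rightarrow> nat option set" where
  "idx N = insert None (Some ` {0..N})"

(* Vectors in R^(N+2), 0-based: e_m (1-based, paper) is position m-1.
   h_i = (-h_{i,0},...,-h_{i,i-1},0,...,0,1), last entry at position N+1; h_* = 0. *)
definition hvec :: "nat \<Rightarrow> (nat \<Rightarrow> nat \<Rightarrow> real) \<Rightarrow> nat option \<Rightarrow> nat \<Rightarrow> real" where
  "hvec N h i = (case i of None \<Rightarrow> (\<lambda>_. 0)
     | Some i \<Rightarrow> (\<lambda>k. if k < i then - h i k else if k = N + 1 then 1 else 0))"

(* u_i = e_{i+1}, i.e. position i (0-based); u_* = 0 *)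
definition uvec :: "nat option \<Rightarrow> nat \<Rightarrow> real" where
  "uvec i = (case i of None \<Rightarrow> (\<lambda>_. 0) | Some i \<Rightarrow> (\<lambda>k. if k = i then 1 else 0))"

(* the matrix A_ij (2 A_ij is given by the formula of the paper) *)
definition Amat :: "real \<Rightarrow> real \<Rightarrow> nat \<Rightarrow> (nat \<Rightarrow> nat \<Rightarrow> real)
                    \<Rightarrow> nat option \<Rightarrow> nat option \<Rightarrow> nat \<Rightarrow> nat \<Rightarrow> real" where
  "Amat mu L N h i j = (\<lambda>k l.
     (let hi = hvec N h i; hj = hvec N h j; ui = uvec i; uj = uvec j;
          dh = (\<lambda>m. hi m - hj m); mdh = (\<lambda>m. hj m - hi m); du = (\<lambda>m. ui m - uj m) in
      (L / (L - mu) * (outer uj dh k l + outer dh uj k l)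
       + 1 / (L - mu) * outer du du k l
       + mu / (L - mu) * (outer ui mdh k l + outer mdh ui k l)
       + L * mu / (L - mu) * outer dh dh k l) / 2))"

definition ARmat :: "nat \<Rightarrow> nat \<Rightarrow> nat \<Rightarrow> real" where
  "ARmat N = (\<lambda>k l. if k = N + 1 \<and> l = N + 1 then 1 else 0)"

definition fval :: "(nat \<Rightarrow> real) \<Rightarrow> nat option \<Rightarrow> real" where
  "fval f i = (case i of None \<Rightarrow> 0 | Some i \<Rightarrow> f i)"

(* v_i = (i+1)-th standard basis vector of R^(N+1) (position i, 0-based), v_* = 0 *)
definition vvec :: "nat option \<Rightarrow> nat \<Rightarrow> real" where
  "vvec i = uvec i"

definition primal_feasible :: "real \<Rightarrow> real \<Rightarrow> real \<Rightarrow> nat \<Rightarrow> (nat \<Rightarrow> nat \<Rightarrow> real)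
     \<Rightarrow> (nat \<Rightarrow> nat \<Rightarrow> real) \<Rightarrow> (nat \<Rightarrow> real) \<Rightarrow> bool" where
  "primal_feasible mu L R N h G f \<longleftrightarrow>
     psd (N + 2) G \<and>
     (\<forall>i\<in>idx N. \<forall>j\<in>idx N. fval f j - fval f i + trace_prod (N + 2) G (Amat mu L N h i j) \<le> 0) \<and>
     trace_prod (N + 2) G (ARmat N) \<le> R\<^sup>2"

definition primal_obj :: "nat \<Rightarrow> (nat \<Rightarrow> real) \<Rightarrow> (nat \<Rightarrow> nat \<Rightarrow> real)
     \<Rightarrow> (nat \<Rightarrow> nat \<Rightarrow> real) \<Rightarrow> (nat \<Rightarrow> real) \<Rightarrow> real" where
  "primal_obj N b C G f = (\<Sum>i\<le>N. b i * f i) + trace_prod (N + 2) C G"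

definition w_sdp :: "real \<Rightarrow> real \<Rightarrow> real \<Rightarrow> (nat \<Rightarrow> nat \<Rightarrow> real) \<Rightarrow> nat
     \<Rightarrow> (nat \<Rightarrow> real) \<Rightarrow> (nat \<Rightarrow> nat \<Rightarrow> real) \<Rightarrow> ereal" where
  "w_sdp mu L R h N b C =
     (SUP p \<in> {(G, f). primal_feasible mu L R N h G f}. ereal (primal_obj N b C (fst p) (snd p)))"

definition dual_feasible :: "real \<Rightarrow> real \<Rightarrow> nat \<Rightarrow> (nat \<Rightarrow> nat \<Rightarrow> real)
     \<Rightarrow> (nat \<Rightarrow> real) \<Rightarrow> (nat \<Rightarrow> nat \<Rightarrow> real)
     \<Rightarrow> (nat option \<Rightarrow> nat option \<Rightarrow> real) \<Rightarrow> real \<Rightarrow> bool" where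
  "dual_feasible mu L N h b C lam tau \<longleftrightarrow>
     psd (N + 2) (\<lambda>k l. tau * ARmat N k l - C k l
        + (\<Sum>i\<in>idx N. \<Sum>j\<in>idx N. lam i j * Amat mu L N h i j k l)) \<and>
     (\<forall>m\<le>N. b m - (\<Sum>i\<in>idx N. \<Sum>j\<in>idx N. lam i j * (vvec j m - vvec i m)) = 0) \<and>
     (\<forall>i\<in>idx N. \<forall>j\<in>idx N. lam i j \<ge> 0) \<and>
     tau \<ge> 0"

end

theory Submission
  imports Defs "HOL-Computational_Algebra.Polynomial"
begin

text \<open>Weak duality is the inequality \<open>\<langle>S, G\<rangle> \<ge> 0\<close> for positive semidefinite \<open>S\<close> and \<open>G\<close>.
  Conversely, the primal problem is an affine program over the convex cone of positive semidefinite
  matrices with finitely many affine inequality constraints, so Lagrange multipliers exist as soon as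
  the primal value is finite and there is a strictly feasible point.
  The value is finite because the two interpolation inequalities between \<open>x\<^sub>i\<close> and \<open>x\<^sub>*\<close> give
  \<open>\<parallel>g\<^sub>i\<parallel> \<le> (L + \<mu>) \<parallel>x\<^sub>i - x\<^sub>*\<parallel>\<close>, which together with \<open>\<parallel>x\<^sub>0 - x\<^sub>*\<parallel> \<le> R\<close> and the recursion
  for \<open>x\<^sub>i\<close> bounds every entry of the Gram matrix by induction on \<open>i\<close>.
  A strictly feasible point is the Gram matrix of the one-dimensional quadratic \<open>c x\<^sup>2 / 2\<close> with
  \<open>\<mu> < c < L\<close>, whose interpolation inequalities are strict between distinct points; its iterates are
  \<open>x\<^sub>i = P\<^sub>i(c) x\<^sub>0\<close> with \<open>deg P\<^sub>i = i\<close> because \<open>h\<^sub>i\<^sub>,\<^sub>i\<^sub>-\<^sub>1 \<noteq> 0\<close>, so for all but finitely many \<open>c\<close>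
  the points \<open>x\<^sub>0, \<dots>, x\<^sub>N, x\<^sub>* = 0\<close> are distinct. Finally, a Lagrangian bounded above over all \<open>f\<close>
  and all positive semidefinite \<open>G\<close> must satisfy exactly the dual constraints.\<close>

section \<open>Bilinear forms, traces and positive semidefinite matrices\<close>

definition bform :: "nat \<Rightarrow> (nat \<Rightarrow> nat \<Rightarrow> real) \<Rightarrow> (nat \<Rightarrow> real) \<Rightarrow> (nat \<Rightarrow> real) \<Rightarrow> real" where
  "bform n G x y = (\<Sum>k<n. \<Sum>l<n. x k * G k l * y l)"

lemma bform_add_left: "bform n G (\<lambda>m. x m + y m) z = bform n G x z + bform n G y z"
  by (simp add: bform_def algebra_simps sum.distrib)

lemma bform_add_right: "bform n G z (\<lambda>m. x m + y m) = bform n G z x + bform n G z y"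
  by (simp add: bform_def algebra_simps sum.distrib)

lemma bform_diff_left: "bform n G (\<lambda>m. x m - y m) z = bform n G x z - bform n G y z"
  by (simp add: bform_def algebra_simps sum_subtractf)

lemma bform_diff_right: "bform n G z (\<lambda>m. x m - y m) = bform n G z x - bform n G z y"
  by (simp add: bform_def algebra_simps sum_subtractf)

lemma bform_scale_left: "bform n G (\<lambda>m. c * x m) z = c * bform n G x z"
  by (simp add: bform_def algebra_simps sum_distrib_left)

lemma bform_scale_right: "bform n G z (\<lambda>m. c * x m) = c * bform n G z x"
  by (simp add: bform_def algebra_simps sum_distrib_left)

lemma bform_zero_left [simp]: "bform n G (\<lambda>m. 0) z = 0"
  and bform_zero_right [simp]: "bform n G z (\<lambda>m. 0) = 0"
  by (simp_all add: bform_def)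

lemma bform_uminus_left [simp]: "bform n G (\<lambda>m. - x m) z = - bform n G x z"
  and bform_uminus_right [simp]: "bform n G z (\<lambda>m. - x m) = - bform n G z x"
  by (simp_all add: bform_def sum_negf)

lemma bform_commute: "sym_mat n G \<Longrightarrow> bform n G x y = bform n G y x"
  unfolding bform_def sym_mat_def
  by (subst sum.swap) (auto intro!: sum.cong simp: mult_ac)

lemma bform_matrix_add: "bform n (\<lambda>k l. A k l + B k l) x y = bform n A x y + bform n B x y"
  by (simp add: bform_def algebra_simps sum.distrib)

lemma bform_matrix_diff: "bform n (\<lambda>k l. A k l - B k l) x y = bform n A x y - bform n B x y"
  by (simp add: bform_def algebra_simps sum_subtractf)

lemma bform_matrix_scale: "bform n (\<lambda>k l. c * A k l) x y = c * bform n A x y"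
  by (simp add: bform_def algebra_simps sum_distrib_left)

lemma bform_outer: "bform n (outer v w) x y = (\<Sum>k<n. x k * v k) * (\<Sum>l<n. y l * w l)"
  by (simp add: bform_def outer_def sum_product mult_ac)

lemma bform_uvec_right:
  assumes "k < n"
  shows "bform n G x (uvec (Some k)) = (\<Sum>i<n. x i * G i k)"
proof -
  have "(\<Sum>l<n. x i * G i l * uvec (Some k) l) = x i * G i k" for i
    using assms by (simp add: uvec_def if_distrib cong: if_cong)
  then show ?thesis
    by (simp add: bform_def)
qed

lemma bform_uvec_uvec:
  assumes "k < n" "l < n"
  shows "bform n G (uvec (Some k)) (uvec (Some l)) = G k l"
proof -
  have "(\<Sum>i<n. uvec (Some k) i * G i l) = (\<Sum>i<n. if i = k then G k l else 0)"
    by (rule sum.cong) (auto simp: uvec_def)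
  then show ?thesis
    using assms by (simp add: bform_uvec_right)
qed

lemma trace_prod_add_right: "trace_prod n G (\<lambda>k l. P k l + Q k l) = trace_prod n G P + trace_prod n G Q"
  by (simp add: trace_prod_def algebra_simps sum.distrib)

lemma trace_prod_scale_right: "trace_prod n G (\<lambda>k l. c * P k l) = c * trace_prod n G P"
  by (simp add: trace_prod_def algebra_simps sum_distrib_left)

lemma trace_prod_divide_right: "trace_prod n G (\<lambda>k l. P k l / c) = trace_prod n G P / c"
  by (simp add: trace_prod_def sum_divide_distrib)

lemma trace_prod_outer: "trace_prod n G (outer x y) = bform n G y x"
  by (simp add: trace_prod_def bform_def outer_def mult_ac)

lemma trace_prod_add_left: "trace_prod n (\<lambda>k l. P k l + Q k l) G = trace_prod n P G + trace_prod n Q G"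
  by (simp add: trace_prod_def algebra_simps sum.distrib)

lemma trace_prod_diff_left: "trace_prod n (\<lambda>k l. P k l - Q k l) G = trace_prod n P G - trace_prod n Q G"
  by (simp add: trace_prod_def algebra_simps sum_subtractf)

lemma trace_prod_scale_left: "trace_prod n (\<lambda>k l. c * P k l) G = c * trace_prod n P G"
  by (simp add: trace_prod_def algebra_simps sum_distrib_left)

lemma trace_prod_sum_left: "trace_prod n (\<lambda>k l. \<Sum>i\<in>I. M i k l) G = (\<Sum>i\<in>I. trace_prod n (M i) G)"
  unfolding trace_prod_def sum_distrib_right
  by (subst sum.swap, subst (2) sum.swap, simp)

lemma trace_prod_commute: "trace_prod n M P = trace_prod n P M"
  unfolding trace_prod_def by (subst sum.swap) (simp add: mult.commute)

lemma trace_prod_convex_comb: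
  "trace_prod n (\<lambda>k l. t * G k l + (1 - t) * G' k l) P = t * trace_prod n G P + (1 - t) * trace_prod n G' P"
  by (simp only: trace_prod_add_left trace_prod_scale_left)

lemma abs_trace_prod_le:
  assumes "\<forall>k<n. \<forall>l<n. \<bar>G k l\<bar> \<le> D"
  shows "\<bar>trace_prod n G P\<bar> \<le> D * (\<Sum>k<n. \<Sum>l<n. \<bar>P l k\<bar>)"
proof -
  have "\<bar>trace_prod n G P\<bar> \<le> (\<Sum>k<n. \<Sum>l<n. \<bar>G k l * P l k\<bar>)"
    unfolding trace_prod_def by (rule order.trans[OF sum_abs sum_mono]) (rule sum_abs)
  also have "\<dots> \<le> (\<Sum>k<n. \<Sum>l<n. D * \<bar>P l k\<bar>)"
    using assms by (intro sum_mono) (auto simp: abs_mult intro: mult_right_mono)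
  finally show ?thesis by (simp add: sum_distrib_left)
qed

lemma psd_bform_nonneg: "psd n G \<Longrightarrow> 0 \<le> bform n G x x"
  by (simp add: psd_def bform_def)

lemma psd_iff_bform: "psd n G \<longleftrightarrow> sym_mat n G \<and> (\<forall>x. 0 \<le> bform n G x x)"
  by (simp add: psd_def bform_def)

lemma psd_bform_commute: "psd n G \<Longrightarrow> bform n G x y = bform n G y x"
  by (simp add: psd_def bform_commute)

lemma psd_cauchy_schwarz:
  assumes "psd n G"
  shows "(bform n G x y)\<^sup>2 \<le> bform n G x x * bform n G y y"
proof -
  define a b c where "a = bform n G x x" and "b = bform n G x y" and "c = bform n G y y"
  have quadratic: "0 \<le> a + 2 * t * b + t\<^sup>2 * c" for t
    using psd_bform_nonneg[OF assms, of "\<lambda>m. x m + t * y m"] psd_bform_commute[OF assms, of y x]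
    by (simp add: a_def b_def c_def bform_add_left bform_add_right bform_scale_left bform_scale_right
        algebra_simps power2_eq_square)
  have "a \<ge> 0" "c \<ge> 0"
    using psd_bform_nonneg[OF assms] by (auto simp: a_def c_def)
  have "b\<^sup>2 \<le> a * c"
  proof (cases "c = 0")
    case True
    have "b = 0"
    proof (rule ccontr)
      assume "b \<noteq> 0"
      then have "a + 2 * (- (a + 1) / (2 * b)) * b = -1"
        by (simp add: field_simps)
      then show False
        using quadratic[of "- (a + 1) / (2 * b)"] True by simp
    qed
    then show ?thesis using True by simp
  next
    case False
    with \<open>c \<ge> 0\<close> have "c > 0" by simp
    have "a + 2 * (- b / c) * b + (- b / c)\<^sup>2 * c = a - b\<^sup>2 / c"
      using \<open>c > 0\<close> by (simp add: field_simps power2_eq_square)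
    then have "b\<^sup>2 / c \<le> a"
      using quadratic[of "- b / c"] by simp
    then show ?thesis
      using \<open>c > 0\<close> by (simp add: divide_le_eq mult.commute)
  qed
  then show ?thesis by (simp add: a_def b_def c_def)
qed

lemma psd_diag_nonneg: "psd n G \<Longrightarrow> k < n \<Longrightarrow> 0 \<le> G k k"
  using psd_bform_nonneg[of n G "uvec (Some k)"] by (simp add: bform_uvec_uvec)

lemma psd_entry_square_le: "psd n G \<Longrightarrow> k < n \<Longrightarrow> l < n \<Longrightarrow> (G k l)\<^sup>2 \<le> G k k * G l l"
  using psd_cauchy_schwarz[of n G "uvec (Some k)" "uvec (Some l)"] by (simp add: bform_uvec_uvec)

lemma psd_abs_entry_le:
  assumes "psd n G" "k < n" "l < n"
  shows "\<bar>G k l\<bar> \<le> (G k k + G l l) / 2"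
proof -
  have "(G k l)\<^sup>2 \<le> ((G k k + G l l) / 2)\<^sup>2"
    using psd_entry_square_le[OF assms] sum_squares_ge_zero[of "(G k k - G l l) / 2" 0]
    by (simp add: power2_eq_square field_simps)
  then have "\<bar>G k l\<bar> \<le> \<bar>(G k k + G l l) / 2\<bar>"
    by (simp only: abs_le_square_iff)
  then show ?thesis
    using psd_diag_nonneg[OF assms(1,2)] psd_diag_nonneg[OF assms(1,3)] by simp
qed

lemma psd_zero: "psd n (\<lambda>k l. 0)"
  by (simp add: psd_def sym_mat_def)

lemma psd_outer: "psd n (outer w w)"
  unfolding psd_iff_bform bform_outer by (simp add: sym_mat_def outer_def mult.commute)

lemma psd_scale: "0 \<le> s \<Longrightarrow> psd n G \<Longrightarrow> psd n (\<lambda>k l. s * G k l)"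
  unfolding psd_iff_bform by (simp add: sym_mat_def bform_matrix_scale)

lemma psd_convex_comb:
  assumes "psd n G" "psd n G'" "0 \<le> t" "t \<le> 1"
  shows "psd n (\<lambda>k l. t * G k l + (1 - t) * G' k l)"
proof -
  have "bform n (\<lambda>k l. t * G k l + (1 - t) * G' k l) x x = t * bform n G x x + (1 - t) * bform n G' x x"
    for x by (simp only: bform_matrix_add bform_matrix_scale)
  then show ?thesis
    using assms unfolding psd_iff_bform sym_mat_def
    by (auto intro!: add_nonneg_nonneg mult_nonneg_nonneg)
qed

lemma psd_restrict: "psd (Suc n) G \<Longrightarrow> psd n G"
  unfolding psd_iff_bform
proof (intro conjI allI)
  fix x assume psd: "sym_mat (Suc n) G \<and> (\<forall>x. 0 \<le> bform (Suc n) G x x)"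
  then show "sym_mat n G" by (simp add: sym_mat_def)
  have "bform (Suc n) G (x(n := 0)) (x(n := 0)) = bform n G x x"
    by (simp add: bform_def)
  then show "0 \<le> bform n G x x" using psd by metis
qed

lemma trace_prod_restrict:
  "\<forall>k<Suc n. G n k = 0 \<and> G k n = 0 \<Longrightarrow> trace_prod (Suc n) S G = trace_prod n S G"
  by (simp add: trace_prod_def)

lemma psd_last_row_zero:
  assumes "psd (Suc n) G" "G n n = 0" "k < Suc n"
  shows "G n k = 0 \<and> G k n = 0"
proof -
  have "(G k n)\<^sup>2 \<le> 0"
    using psd_entry_square_le[OF assms(1,3), of n] assms(2) by simp
  moreover have "G n k = G k n"
    using assms(1,3) by (simp add: psd_def sym_mat_def)
  ultimately show ?thesis by simp
qed

text \<open>One step of Cholesky elimination.\<close>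

lemma psd_eliminate_last:
  assumes "psd (Suc n) G" "0 < G n n"
  defines "G' \<equiv> \<lambda>k l. G k l - inverse (G n n) * outer (\<lambda>m. G m n) (\<lambda>m. G m n) k l"
  shows "psd (Suc n) G'" and "\<forall>k<Suc n. G' n k = 0 \<and> G' k n = 0"
proof -
  have sym: "G k l = G l k" if "k < Suc n" "l < Suc n" for k l
    using assms(1) that by (simp add: psd_def sym_mat_def)
  have "0 \<le> bform (Suc n) G' x x" for x
  proof -
    have "bform (Suc n) G' x x = bform (Suc n) G x x - (bform (Suc n) G x (uvec (Some n)))\<^sup>2 / G n n"
      unfolding G'_def bform_matrix_diff bform_matrix_scale bform_outer bform_uvec_right[OF lessI]
      by (simp add: power2_eq_square divide_inverse mult.commute)
    moreover have "(bform (Suc n) G x (uvec (Some n)))\<^sup>2 \<le> bform (Suc n) G x x * G n n"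
      using psd_cauchy_schwarz[OF assms(1), of x "uvec (Some n)"] by (simp add: bform_uvec_uvec)
    ultimately show ?thesis
      using assms(2) by (simp add: divide_le_eq)
  qed
  moreover have "sym_mat (Suc n) G'"
    using sym by (simp add: sym_mat_def G'_def outer_def mult.commute)
  ultimately show "psd (Suc n) G'"
    by (simp add: psd_iff_bform)
  show "\<forall>k<Suc n. G' n k = 0 \<and> G' k n = 0"
    using assms(2) sym by (simp add: G'_def outer_def)
qed

lemma trace_prod_psd_nonneg: "psd n S \<Longrightarrow> psd n G \<Longrightarrow> 0 \<le> trace_prod n S G"
proof (induction n arbitrary: G)
  case 0
  then show ?case by (simp add: trace_prod_def)
next
  case (Suc n)
  note IH = Suc.IH[OF psd_restrict[OF Suc.prems(1)] psd_restrict]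
  consider "G n n = 0" | "0 < G n n"
    using psd_diag_nonneg[OF Suc.prems(2), of n] by linarith
  then show ?case
  proof cases
    case 1
    then have "\<forall>k<Suc n. G n k = 0 \<and> G k n = 0"
      using psd_last_row_zero[OF Suc.prems(2)] by blast
    then show ?thesis
      using IH[OF Suc.prems(2)] by (simp only: trace_prod_restrict)
  next
    case 2
    define c where "c = (\<lambda>m. G m n)"
    define G' where "G' = (\<lambda>k l. G k l - inverse (G n n) * outer c c k l)"
    note eliminated = psd_eliminate_last[OF Suc.prems(2) 2, folded c_def, folded G'_def]
    note psd' = eliminated(1)
    have zero: "\<forall>k<Suc n. G' n k = 0 \<and> G' k n = 0"
      using eliminated(2) by (simp only: G'_def)
    have "trace_prod (Suc n) S G = trace_prod (Suc n) S (\<lambda>k l. G' k l + inverse (G n n) * outer c c k l)"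
      by (simp add: G'_def)
    also have "\<dots> = trace_prod n S G' + inverse (G n n) * bform (Suc n) S c c"
      unfolding trace_prod_add_right trace_prod_scale_right trace_prod_outer trace_prod_restrict[OF zero] ..
    finally show ?thesis
      using IH[OF psd'] 2 psd_bform_nonneg[OF Suc.prems(1), of c] by simp
  qed
qed

definition snorm :: "nat \<Rightarrow> (nat \<Rightarrow> nat \<Rightarrow> real) \<Rightarrow> (nat \<Rightarrow> real) \<Rightarrow> real" where
  "snorm n G x = sqrt (bform n G x x)"

lemma snorm_nonneg: "psd n G \<Longrightarrow> 0 \<le> snorm n G x"
  by (simp add: snorm_def psd_bform_nonneg)

lemma snorm_square: "psd n G \<Longrightarrow> (snorm n G x)\<^sup>2 = bform n G x x"
  by (simp add: snorm_def psd_bform_nonneg)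

lemma snorm_uvec: "k < n \<Longrightarrow> snorm n G (uvec (Some k)) = sqrt (G k k)"
  by (simp add: snorm_def bform_uvec_uvec)

lemma psd_abs_bform_le: "psd n G \<Longrightarrow> \<bar>bform n G x y\<bar> \<le> snorm n G x * snorm n G y"
  using psd_cauchy_schwarz[of n G x y] psd_bform_nonneg[of n G]
  by (simp add: snorm_def real_le_rsqrt real_sqrt_mult[symmetric] real_sqrt_abs[symmetric] del: real_sqrt_abs)

lemma snorm_add_le:
  assumes "psd n G"
  shows "snorm n G (\<lambda>m. x m + y m) \<le> snorm n G x + snorm n G y"
proof -
  have "(snorm n G (\<lambda>m. x m + y m))\<^sup>2 = (snorm n G x)\<^sup>2 + 2 * bform n G x y + (snorm n G y)\<^sup>2"
    using psd_bform_commute[OF assms, of y x]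
    by (simp add: snorm_square[OF assms] bform_add_left bform_add_right)
  also have "\<dots> \<le> (snorm n G x + snorm n G y)\<^sup>2"
    using psd_abs_bform_le[OF assms, of x y] by (simp add: power2_eq_square algebra_simps)
  finally show ?thesis
    using snorm_nonneg[OF assms] by (meson add_nonneg_nonneg power2_le_imp_le)
qed

lemma snorm_scale: "snorm n G (\<lambda>m. c * x m) = \<bar>c\<bar> * snorm n G x"
  by (simp add: snorm_def bform_scale_left bform_scale_right real_sqrt_mult mult.assoc[symmetric])

lemma snorm_sum_le:
  assumes "psd n G" "finite K"
  shows "snorm n G (\<lambda>m. \<Sum>k\<in>K. c k * y k m) \<le> (\<Sum>k\<in>K. \<bar>c k\<bar> * snorm n G (y k))"
  using assms(2)
proof (induction K rule: finite_induct)
  case empty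
  then show ?case by (simp add: snorm_def)
next
  case (insert a K)
  have "snorm n G (\<lambda>m. \<Sum>k\<in>insert a K. c k * y k m)
      \<le> snorm n G (\<lambda>m. c a * y a m) + snorm n G (\<lambda>m. \<Sum>k\<in>K. c k * y k m)"
    using insert.hyps snorm_add_le[OF assms(1)] by simp
  then show ?case
    using insert by (simp add: snorm_scale)
qed

section \<open>Lagrange multipliers for affine programs\<close>

text \<open>A convex set is modelled abstractly by a set closed under a convex-combination operator;
  this avoids putting a vector-space structure on the space of primal variables.\<close>

definition mix_closed :: "'a set \<Rightarrow> (real \<Rightarrow> 'a \<Rightarrow> 'a \<Rightarrow> 'a) \<Rightarrow> bool" where
  "mix_closed X mix \<longleftrightarrow> (\<forall>x\<in>X. \<forall>y\<in>X. \<forall>t. 0 \<le> t \<and> t \<le> 1 \<longrightarrow> mix t x y \<in> X)"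

definition mix_affine :: "'a set \<Rightarrow> (real \<Rightarrow> 'a \<Rightarrow> 'a \<Rightarrow> 'a) \<Rightarrow> ('a \<Rightarrow> real) \<Rightarrow> bool" where
  "mix_affine X mix \<phi> \<longleftrightarrow>
     (\<forall>x\<in>X. \<forall>y\<in>X. \<forall>t. 0 \<le> t \<and> t \<le> 1 \<longrightarrow> \<phi> (mix t x y) = t * \<phi> x + (1 - t) * \<phi> y)"

lemma mix_affine_diff_sum:
  assumes "mix_affine X mix F" "\<forall>k\<in>K. mix_affine X mix (g k)"
  shows "mix_affine X mix (\<lambda>x. F x - (\<Sum>k\<in>K. l k * g k x))"
  unfolding mix_affine_def
proof (intro ballI allI impI)
  fix x y and t :: real assume xy: "x \<in> X" "y \<in> X" and t: "0 \<le> t \<and> t \<le> 1"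
  have "(\<Sum>k\<in>K. l k * g k (mix t x y)) = (\<Sum>k\<in>K. t * (l k * g k x) + (1 - t) * (l k * g k y))"
  proof (intro sum.cong refl)
    fix k assume "k \<in> K"
    then have eq: "g k (mix t x y) = t * g k x + (1 - t) * g k y"
      using assms(2) xy t by (simp add: mix_affine_def)
    show "l k * g k (mix t x y) = t * (l k * g k x) + (1 - t) * (l k * g k y)"
      unfolding eq by (simp add: algebra_simps)
  qed
  also have "\<dots> = t * (\<Sum>k\<in>K. l k * g k x) + (1 - t) * (\<Sum>k\<in>K. l k * g k y)"
    by (simp add: sum.distrib sum_distrib_left)
  moreover have "F (mix t x y) = t * F x + (1 - t) * F y"
    using assms(1) xy t by (simp add: mix_affine_def)
  ultimately show "F (mix t x y) - (\<Sum>k\<in>K. l k * g k (mix t x y)) =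
      t * (F x - (\<Sum>k\<in>K. l k * g k x)) + (1 - t) * (F y - (\<Sum>k\<in>K. l k * g k y))"
    by (simp add: algebra_simps)
qed

lemma mix_closed_sublevel:
  assumes "mix_closed X mix" "mix_affine X mix g"
  shows "mix_closed {x \<in> X. g x \<le> 0} mix"
  unfolding mix_closed_def
proof (intro ballI allI impI)
  fix x y and t :: real
  assume xy: "x \<in> {x \<in> X. g x \<le> 0}" "y \<in> {x \<in> X. g x \<le> 0}" and t: "0 \<le> t \<and> t \<le> 1"
  have "g (mix t x y) = t * g x + (1 - t) * g y"
    using assms(2) xy t by (simp add: mix_affine_def)
  also have "\<dots> \<le> 0"
    using xy t by (intro add_nonpos_nonpos mult_nonneg_nonpos) auto
  finally show "mix t x y \<in> {x \<in> X. g x \<le> 0}"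
    using assms(1) xy t by (simp add: mix_closed_def)
qed

text \<open>The point where the segment from \<open>x\<close> to \<open>y\<close> crosses \<open>g = 0\<close> is feasible, which compares the
  slopes at an infeasible and a strictly feasible point.\<close>

lemma mix_affine_slope_le:
  assumes mc: "mix_closed X mix" and aF: "mix_affine X mix F" and ag: "mix_affine X mix g"
    and bound: "\<forall>x\<in>X. g x \<le> 0 \<longrightarrow> F x \<le> p"
    and xy: "x \<in> X" "y \<in> X" "g x > 0" "g y < 0"
  shows "(F x - p) / g x \<le> (p - F y) / (- g y)"
proof -
  define t where "t = - g y / (g x - g y)"
  have t: "0 \<le> t" "t \<le> 1" "1 - t = g x / (g x - g y)"
    using xy by (auto simp: t_def field_simps)
  have "g (mix t x y) = t * g x + (1 - t) * g y"
    using ag xy t by (simp add: mix_affine_def)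
  also have "\<dots> = 0"
    using xy unfolding t(3) by (simp add: t_def field_simps)
  finally have "g (mix t x y) = 0" .
  moreover have "mix t x y \<in> X"
    using mc xy t by (simp add: mix_closed_def)
  ultimately have "F (mix t x y) \<le> p"
    using bound by simp
  moreover have "F (mix t x y) = t * F x + (1 - t) * F y"
    using aF xy t by (simp add: mix_affine_def)
  ultimately have "t * F x + (1 - t) * F y \<le> p"
    by simp
  moreover have "t * F x + (1 - t) * F y = (- g y * F x + g x * F y) / (g x - g y)"
    using xy unfolding t(3) by (simp add: t_def diff_divide_distrib)
  ultimately have "- g y * F x + g x * F y \<le> p * (g x - g y)"
    using xy by (simp add: divide_le_eq)
  then show ?thesis
    using xy by (simp add: field_simps)
qed

text \<open>For one constraint, the multiplier is the supremum of the slopes \<open>(F x - p) / g x\<close> over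
  infeasible points, which is finite by the previous lemma.\<close>

lemma lagrange_multiplier_affine:
  assumes mc: "mix_closed X mix" and aF: "mix_affine X mix F" and ag: "mix_affine X mix g"
    and x0: "x0 \<in> X" "g x0 < 0" and bound: "\<forall>x\<in>X. g x \<le> 0 \<longrightarrow> F x \<le> p"
  shows "\<exists>l\<ge>0. \<forall>x\<in>X. F x - l * g x \<le> p"
proof -
  note slopes = mix_affine_slope_le[OF mc aF ag bound]
  define S where "S = {(F x - p) / g x | x. x \<in> X \<and> g x > 0}"
  show ?thesis
  proof (cases "S = {}")
    case True
    then show ?thesis
      using bound by (intro exI[of _ 0]) (auto simp: S_def not_less)
  next
    case nonempty: False
    have bdd: "bdd_above S"
      unfolding S_def by (rule bdd_aboveI[of _ "(p - F x0) / (- g x0)"]) (use slopes x0 in auto)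
    define l where "l = max 0 (Sup S)"
    have "F x - l * g x \<le> p" if x: "x \<in> X" for x
    proof (cases "g x > 0")
      case True
      then have "(F x - p) / g x \<le> l"
        using x bdd unfolding l_def S_def by (intro max.coboundedI2 cSup_upper) auto
      then show ?thesis
        using True by (simp add: divide_le_eq algebra_simps)
    next
      case False
      have "l * (- g x) \<le> p - F x" if "g x < 0"
      proof -
        have "Sup S \<le> (p - F x) / (- g x)"
          using nonempty x that slopes by (intro cSup_least) (auto simp: S_def)
        moreover have "0 \<le> (p - F x) / (- g x)"
          using that bound x by (intro divide_nonneg_pos) auto
        ultimately have "l \<le> (p - F x) / (- g x)"
          by (simp add: l_def)
        then have "l * (- g x) \<le> (p - F x) / (- g x) * (- g x)"
          using that by (intro mult_right_mono) auto
        then show ?thesis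
          using that by simp
      qed
      then show ?thesis
        using False bound x by (cases "g x = 0") (auto simp: algebra_simps)
    qed
    then show ?thesis
      by (intro exI[of _ l]) (simp add: l_def)
  qed
qed

text \<open>Induction on the constraints: the constraint \<open>g a\<close> is first absorbed into the domain
  \<open>{x \<in> X. g a x \<le> 0}\<close>, where the induction hypothesis handles the others, and is then removed
  again by the one-constraint case.\<close>

lemma lagrange_multipliers_affine:
  assumes "finite K" "mix_closed X mix" "mix_affine X mix F" "\<forall>k\<in>K. mix_affine X mix (g k)"
    and "x0 \<in> X" "\<forall>k\<in>K. g k x0 < 0" and "\<forall>x\<in>X. (\<forall>k\<in>K. g k x \<le> 0) \<longrightarrow> F x \<le> p"
  shows "\<exists>l. (\<forall>k\<in>K. 0 \<le> l k) \<and> (\<forall>x\<in>X. F x - (\<Sum>k\<in>K. l k * g k x) \<le> p)"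
  using assms
proof (induction K arbitrary: X F rule: finite_induct)
  case empty
  then show ?case by auto
next
  case (insert a K)
  define X' where "X' = {x \<in> X. g a x \<le> 0}"
  have restrict: "mix_affine X' mix \<phi>" if "mix_affine X mix \<phi>" for \<phi>
    using that by (auto simp: mix_affine_def X'_def)
  obtain l where l: "\<forall>k\<in>K. 0 \<le> l k" "\<forall>x\<in>X'. F x - (\<Sum>k\<in>K. l k * g k x) \<le> p"
    using insert.IH[of X' F] insert.prems restrict mix_closed_sublevel[of X mix "g a"]
    by (auto simp: X'_def)
  have "mix_affine X mix (\<lambda>x. F x - (\<Sum>k\<in>K. l k * g k x))"
    using insert.prems(2,3) by (intro mix_affine_diff_sum) auto
  from lagrange_multiplier_affine[OF insert.prems(1) this, of "g a" x0 p]
  obtain m where m: "m \<ge> 0" "\<forall>x\<in>X. F x - (\<Sum>k\<in>K. l k * g k x) - m * g a x \<le> p"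
    using insert.prems l(2) by (auto simp: X'_def)
  have "(\<Sum>k\<in>insert a K. (l(a := m)) k * g k x) = m * g a x + (\<Sum>k\<in>K. l k * g k x)" for x
    using insert.hyps by (auto intro!: sum.cong)
  then show ?case
    using l(1) m insert.hyps by (intro exI[of _ "l(a := m)"]) (auto simp: algebra_simps)
qed

section \<open>The performance estimation problem and its dual\<close>

lemma finite_idx: "finite (idx N)"
  by (simp add: idx_def)

lemma hvec_None [simp]: "hvec N h None = (\<lambda>_. 0)"
  by (simp add: hvec_def)

lemma uvec_None [simp]: "uvec None = (\<lambda>_. 0)"
  by (simp add: uvec_def)

lemma hvec_Some_eq:
  assumes "i \<le> N"
  shows "hvec N h (Some i) = (\<lambda>m. uvec (Some (N + 1)) m + (\<Sum>k<i. - h i k * uvec (Some k) m))"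
proof
  fix m
  have "(\<Sum>k<i. - h i k * uvec (Some k) m) = (\<Sum>k<i. if k = m then - h i m else 0)"
    by (rule sum.cong) (auto simp: uvec_def)
  then show "hvec N h (Some i) m = uvec (Some (N + 1)) m + (\<Sum>k<i. - h i k * uvec (Some k) m)"
    using assms by (auto simp: hvec_def uvec_def)
qed

lemma sum_vvec_eq_fval:
  assumes "i \<in> idx N"
  shows "(\<Sum>m\<le>N. vvec i m * f m) = fval f i"
proof (cases i)
  case (Some k)
  have "(\<Sum>m\<le>N. vvec i m * f m) = (\<Sum>m\<le>N. if m = k then f k else 0)"
    by (rule sum.cong) (auto simp: Some vvec_def uvec_def)
  then show ?thesis
    using assms Some by (auto simp: fval_def idx_def)
qed (simp add: vvec_def fval_def)

lemma fval_convex_comb: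
  "fval (\<lambda>m. t * f m + (1 - t) * f' m) i = t * fval f i + (1 - t) * fval f' i"
  by (cases i) (simp_all add: fval_def)

lemma Amat_diag: "Amat mu L N h i i = (\<lambda>k l. 0)"
  by (simp add: Amat_def outer_def Let_def)

lemma Amat_commute: "Amat mu L N h i j k l = Amat mu L N h i j l k"
  by (simp add: Amat_def outer_def Let_def algebra_simps)

lemma trace_prod_ARmat: "trace_prod (N + 2) G (ARmat N) = G (N + 1) (N + 1)"
proof -
  have "ARmat N = outer (uvec (Some (N + 1))) (uvec (Some (N + 1)))"
    by (auto simp: ARmat_def outer_def uvec_def)
  then show ?thesis
    by (simp add: trace_prod_outer bform_uvec_uvec)
qed

lemma trace_prod_Amat:
  assumes "sym_mat n G"
  shows "trace_prod n G (Amat mu L N h i j) =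
    (2 * L * bform n G (uvec j) (\<lambda>m. hvec N h i m - hvec N h j m)
     + bform n G (\<lambda>m. uvec i m - uvec j m) (\<lambda>m. uvec i m - uvec j m)
     + 2 * mu * bform n G (uvec i) (\<lambda>m. hvec N h j m - hvec N h i m)
     + L * mu * bform n G (\<lambda>m. hvec N h i m - hvec N h j m) (\<lambda>m. hvec N h i m - hvec N h j m))
    / (2 * (L - mu))"
proof -
  define du where "du = (\<lambda>m. uvec i m - uvec j m)"
  define dh where "dh = (\<lambda>m. hvec N h i m - hvec N h j m)"
  define mdh where "mdh = (\<lambda>m. hvec N h j m - hvec N h i m)"
  have "trace_prod n G (Amat mu L N h i j) =
      (L / (L - mu) * (bform n G dh (uvec j) + bform n G (uvec j) dh) + 1 / (L - mu) * bform n G du du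
       + mu / (L - mu) * (bform n G mdh (uvec i) + bform n G (uvec i) mdh)
       + L * mu / (L - mu) * bform n G dh dh) / 2"
    unfolding Amat_def Let_def trace_prod_divide_right trace_prod_add_right trace_prod_scale_right
      trace_prod_outer du_def dh_def mdh_def ..
  also have "\<dots> = (2 * L * bform n G (uvec j) dh + bform n G du du + 2 * mu * bform n G (uvec i) mdh
      + L * mu * bform n G dh dh) / (2 * (L - mu))"
  proof -
    have "(L / d * (a + a) + 1 / d * b + mu / d * (c + c) + L * mu / d * e) / 2
        = (2 * L * a + b + 2 * mu * c + L * mu * e) / (2 * d)" for a b c d e :: real
      by (cases "d = 0") (simp_all add: field_simps)
    then show ?thesis
      unfolding bform_commute[OF assms, of dh "uvec j"] bform_commute[OF assms, of mdh "uvec i"] .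
  qed
  finally show ?thesis
    by (simp add: du_def dh_def mdh_def)
qed

definition interp_gap :: "real \<Rightarrow> real \<Rightarrow> nat \<Rightarrow> (nat \<Rightarrow> nat \<Rightarrow> real) \<Rightarrow> (nat \<Rightarrow> nat \<Rightarrow> real)
    \<Rightarrow> (nat \<Rightarrow> real) \<Rightarrow> nat option \<Rightarrow> nat option \<Rightarrow> real" where
  "interp_gap mu L N h G f i j = fval f j - fval f i + trace_prod (N + 2) G (Amat mu L N h i j)"

lemma primal_feasible_iff:
  "primal_feasible mu L R N h G f \<longleftrightarrow> psd (N + 2) G
     \<and> (\<forall>i\<in>idx N. \<forall>j\<in>idx N. interp_gap mu L N h G f i j \<le> 0) \<and> G (N + 1) (N + 1) \<le> R\<^sup>2"
  unfolding primal_feasible_def interp_gap_def trace_prod_ARmat ..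

lemma interp_gap_diag [simp]: "interp_gap mu L N h G f i i = 0"
  by (simp add: interp_gap_def Amat_diag trace_prod_def)

lemma primal_feasible_iff_off_diagonal:
  "primal_feasible mu L R N h G f \<longleftrightarrow> psd (N + 2) G
     \<and> (\<forall>i\<in>idx N. \<forall>j\<in>idx N. i \<noteq> j \<longrightarrow> interp_gap mu L N h G f i j \<le> 0)
     \<and> G (N + 1) (N + 1) \<le> R\<^sup>2"
  unfolding primal_feasible_iff by (metis interp_gap_diag order.refl)

definition dual_slack :: "real \<Rightarrow> real \<Rightarrow> nat \<Rightarrow> (nat \<Rightarrow> nat \<Rightarrow> real) \<Rightarrow> (nat \<Rightarrow> nat \<Rightarrow> real)
    \<Rightarrow> (nat option \<Rightarrow> nat option \<Rightarrow> real) \<Rightarrow> real \<Rightarrow> nat \<Rightarrow> nat \<Rightarrow> real" where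
  "dual_slack mu L N h C lam tau = (\<lambda>k l. tau * ARmat N k l - C k l
     + (\<Sum>i\<in>idx N. \<Sum>j\<in>idx N. lam i j * Amat mu L N h i j k l))"

definition dual_residual :: "nat \<Rightarrow> (nat option \<Rightarrow> nat option \<Rightarrow> real) \<Rightarrow> nat \<Rightarrow> real" where
  "dual_residual N lam m = (\<Sum>i\<in>idx N. \<Sum>j\<in>idx N. lam i j * (vvec j m - vvec i m))"

lemma dual_feasible_iff:
  "dual_feasible mu L N h b C lam tau \<longleftrightarrow> psd (N + 2) (dual_slack mu L N h C lam tau)
     \<and> (\<forall>m\<le>N. b m = dual_residual N lam m) \<and> (\<forall>i\<in>idx N. \<forall>j\<in>idx N. 0 \<le> lam i j) \<and> 0 \<le> tau"
  by (simp add: dual_feasible_def dual_slack_def dual_residual_def)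

definition lagrangian :: "real \<Rightarrow> real \<Rightarrow> real \<Rightarrow> nat \<Rightarrow> (nat \<Rightarrow> nat \<Rightarrow> real) \<Rightarrow> (nat \<Rightarrow> real)
    \<Rightarrow> (nat \<Rightarrow> nat \<Rightarrow> real) \<Rightarrow> (nat option \<Rightarrow> nat option \<Rightarrow> real) \<Rightarrow> real
    \<Rightarrow> (nat \<Rightarrow> nat \<Rightarrow> real) \<Rightarrow> (nat \<Rightarrow> real) \<Rightarrow> real" where
  "lagrangian mu L R N h b C lam tau G f = primal_obj N b C G f
     - (\<Sum>i\<in>idx N. \<Sum>j\<in>idx N. lam i j * interp_gap mu L N h G f i j) - tau * (G (N + 1) (N + 1) - R\<^sup>2)"

lemma sum_dual_residual:
  "(\<Sum>m\<le>N. dual_residual N lam m * f m) = (\<Sum>i\<in>idx N. \<Sum>j\<in>idx N. lam i j * (fval f j - fval f i))"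
proof -
  have "(\<Sum>m\<le>N. dual_residual N lam m * f m)
      = (\<Sum>i\<in>idx N. \<Sum>j\<in>idx N. lam i j * ((\<Sum>m\<le>N. vvec j m * f m) - (\<Sum>m\<le>N. vvec i m * f m)))"
    unfolding dual_residual_def sum_distrib_left sum_distrib_right sum_subtractf[symmetric]
    by (subst sum.swap, rule sum.cong[OF refl], subst sum.swap) (simp add: algebra_simps)
  also have "\<dots> = (\<Sum>i\<in>idx N. \<Sum>j\<in>idx N. lam i j * (fval f j - fval f i))"
    by (simp add: sum_vvec_eq_fval)
  finally show ?thesis .
qed

lemma trace_prod_dual_slack:
  "trace_prod (N + 2) (dual_slack mu L N h C lam tau) G = tau * G (N + 1) (N + 1) - trace_prod (N + 2) C G
     + (\<Sum>i\<in>idx N. \<Sum>j\<in>idx N. lam i j * trace_prod (N + 2) G (Amat mu L N h i j))"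
  unfolding dual_slack_def trace_prod_add_left trace_prod_diff_left trace_prod_scale_left
    trace_prod_sum_left trace_prod_commute[of _ _ G] trace_prod_ARmat
  by simp

lemma lagrangian_eq:
  "lagrangian mu L R N h b C lam tau G f = (\<Sum>m\<le>N. (b m - dual_residual N lam m) * f m)
     - trace_prod (N + 2) (dual_slack mu L N h C lam tau) G + tau * R\<^sup>2"
proof -
  have "(\<Sum>i\<in>idx N. \<Sum>j\<in>idx N. lam i j * interp_gap mu L N h G f i j)
      = (\<Sum>i\<in>idx N. \<Sum>j\<in>idx N. lam i j * (fval f j - fval f i))
        + (\<Sum>i\<in>idx N. \<Sum>j\<in>idx N. lam i j * trace_prod (N + 2) G (Amat mu L N h i j))"
    by (simp add: interp_gap_def distrib_left sum.distrib)
  moreover have "(\<Sum>m\<le>N. (b m - dual_residual N lam m) * f m)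
      = (\<Sum>m\<le>N. b m * f m) - (\<Sum>i\<in>idx N. \<Sum>j\<in>idx N. lam i j * (fval f j - fval f i))"
    by (simp add: left_diff_distrib sum_subtractf sum_dual_residual)
  ultimately show ?thesis
    unfolding lagrangian_def primal_obj_def trace_prod_dual_slack by (simp add: algebra_simps)
qed

lemma weak_duality:
  assumes "dual_feasible mu L N h b C lam tau" and "primal_feasible mu L R N h G f"
  shows "primal_obj N b C G f \<le> tau * R\<^sup>2"
proof -
  have "(\<Sum>i\<in>idx N. \<Sum>j\<in>idx N. lam i j * interp_gap mu L N h G f i j) \<le> 0"
    using assms by (auto simp: dual_feasible_iff primal_feasible_iff intro!: sum_nonpos mult_nonneg_nonpos)
  moreover have "tau * (G (N + 1) (N + 1) - R\<^sup>2) \<le> 0"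
    using assms by (auto simp: dual_feasible_iff primal_feasible_iff intro!: mult_nonneg_nonpos)
  moreover have "0 \<le> trace_prod (N + 2) (dual_slack mu L N h C lam tau) G"
    using assms by (simp add: dual_feasible_iff primal_feasible_iff trace_prod_psd_nonneg)
  ultimately show ?thesis
    using assms lagrangian_eq[of mu L R N h b C lam tau G f]
    by (simp add: lagrangian_def dual_feasible_iff)
qed

text \<open>If the Lagrangian is bounded above on the whole cone of positive semidefinite \<open>G\<close> and all
  \<open>f\<close>, its linear part in \<open>f\<close> must vanish and its part in \<open>G\<close> must be nonpositive, which is dual
  feasibility.\<close>

lemma dual_feasible_of_lagrangian_bound:
  assumes "sym_mat (N + 2) C" and "\<forall>i\<in>idx N. \<forall>j\<in>idx N. 0 \<le> lam i j" and "0 \<le> tau"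
    and bound: "\<And>G f. psd (N + 2) G \<Longrightarrow> lagrangian mu L R N h b C lam tau G f \<le> p"
  shows "dual_feasible mu L N h b C lam tau \<and> tau * R\<^sup>2 \<le> p"
proof -
  define S where "S = dual_slack mu L N h C lam tau"
  define r where "r m = b m - dual_residual N lam m" for m
  have bound': "(\<Sum>m\<le>N. r m * f m) - trace_prod (N + 2) S G + tau * R\<^sup>2 \<le> p" if "psd (N + 2) G" for G f
    using bound[OF that, of f] by (simp add: lagrangian_eq S_def r_def)
  have tau: "tau * R\<^sup>2 \<le> p"
    using bound'[OF psd_zero, of "\<lambda>_. 0"] by (simp add: trace_prod_def)
  have residual: "r m = 0" if "m \<le> N" for m
  proof (rule ccontr)
    assume "r m \<noteq> 0"
    define f where "f k = (if k = m then (p - tau * R\<^sup>2 + 1) / r m else 0)" for k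
    have "(\<Sum>k\<le>N. r k * f k) = p - tau * R\<^sup>2 + 1"
      using that \<open>r m \<noteq> 0\<close> by (simp add: f_def if_distrib cong: if_cong)
    then show False
      using bound'[OF psd_zero, of f] by (simp add: trace_prod_def)
  qed
  have "0 \<le> bform (N + 2) S x x" for x
  proof (rule ccontr)
    assume neg: "\<not> 0 \<le> bform (N + 2) S x x"
    define s where "s = (p - tau * R\<^sup>2 + 1) / - bform (N + 2) S x x"
    have "0 \<le> s"
      unfolding s_def using neg tau by (intro divide_nonneg_pos) auto
    then have "psd (N + 2) (\<lambda>k l. s * outer x x k l)"
      by (simp add: psd_scale psd_outer)
    moreover have "trace_prod (N + 2) S (\<lambda>k l. s * outer x x k l) = - (p - tau * R\<^sup>2 + 1)"
      unfolding trace_prod_scale_right trace_prod_outer using neg by (simp add: s_def)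
    ultimately show False
      using bound'[of _ "\<lambda>_. 0"] by fastforce
  qed
  moreover have "sym_mat (N + 2) S"
    using assms(1) by (simp add: sym_mat_def S_def dual_slack_def ARmat_def Amat_commute conj_commute)
  ultimately show ?thesis
    using assms(2,3) residual tau by (simp add: dual_feasible_iff psd_iff_bform S_def r_def)
qed

section \<open>Boundedness of the primal problem\<close>

lemma abs_fval_le:
  assumes "primal_feasible mu L R N h G f" "i \<le> N"
  shows "\<bar>f i\<bar> \<le> \<bar>trace_prod (N + 2) G (Amat mu L N h (Some i) None)\<bar>
      + \<bar>trace_prod (N + 2) G (Amat mu L N h None (Some i))\<bar>"
proof -
  have "interp_gap mu L N h G f (Some i) None \<le> 0" "interp_gap mu L N h G f None (Some i) \<le> 0"
    using assms by (auto simp: primal_feasible_iff idx_def)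
  then show ?thesis
    by (auto simp: interp_gap_def fval_def)
qed

context
  fixes mu L R :: real and N :: nat and h :: "nat \<Rightarrow> nat \<Rightarrow> real"
  assumes mu_nonneg: "0 \<le> mu" and mu_less_L: "mu < L"
begin

text \<open>Adding the two interpolation inequalities between \<open>x\<^sub>i\<close> and \<open>x\<^sub>*\<close> gives co-coercivity
  \<open>\<parallel>g\<^sub>i\<parallel>\<^sup>2 \<le> (L + \<mu>) \<langle>g\<^sub>i, x\<^sub>i - x\<^sub>*\<rangle>\<close>.\<close>

lemma snorm_gradient_le:
  assumes feasible: "primal_feasible mu L R N h G f" and "i \<le> N"
  shows "snorm (N + 2) G (uvec (Some i)) \<le> (L + mu) * snorm (N + 2) G (hvec N h (Some i))"
proof -
  let ?u = "uvec (Some i)" and ?x = "hvec N h (Some i)"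
  have psd: "psd (N + 2) G" and sym: "sym_mat (N + 2) G"
    using feasible by (simp_all add: primal_feasible_iff psd_def)
  have "interp_gap mu L N h G f (Some i) None + interp_gap mu L N h G f None (Some i) \<le> 0"
    using feasible \<open>i \<le> N\<close> by (auto simp: primal_feasible_iff idx_def intro: add_nonpos_nonpos)
  then have "(2 * bform (N + 2) G ?u ?u - 2 * (L + mu) * bform (N + 2) G ?u ?x
      + 2 * L * mu * bform (N + 2) G ?x ?x) / (2 * (L - mu)) \<le> 0"
    unfolding interp_gap_def trace_prod_Amat[OF sym]
    by (simp add: fval_def add_divide_distrib[symmetric] algebra_simps)
  then have "bform (N + 2) G ?u ?u \<le> (L + mu) * bform (N + 2) G ?u ?x - L * mu * bform (N + 2) G ?x ?x"
    using mu_less_L by (simp add: divide_le_0_iff algebra_simps)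
  also have "\<dots> \<le> (L + mu) * (snorm (N + 2) G ?u * snorm (N + 2) G ?x)"
  proof -
    have "(L + mu) * bform (N + 2) G ?u ?x \<le> (L + mu) * (snorm (N + 2) G ?u * snorm (N + 2) G ?x)"
      using mu_nonneg mu_less_L psd_abs_bform_le[OF psd, of ?u ?x]
      by (intro mult_left_mono) (auto simp: abs_le_iff)
    moreover have "0 \<le> L * mu * bform (N + 2) G ?x ?x"
      using mu_nonneg mu_less_L psd_bform_nonneg[OF psd, of ?x] by simp
    ultimately show ?thesis by linarith
  qed
  finally have "(snorm (N + 2) G ?u)\<^sup>2 \<le> (L + mu) * (snorm (N + 2) G ?u * snorm (N + 2) G ?x)"
    by (simp only: snorm_square[OF psd])
  then have "snorm (N + 2) G ?u * snorm (N + 2) G ?u \<le> snorm (N + 2) G ?u * ((L + mu) * snorm (N + 2) G ?x)"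
    by (simp add: power2_eq_square mult_ac)
  then show ?thesis
    using snorm_nonneg[OF psd, of ?u] snorm_nonneg[OF psd, of ?x] mu_nonneg mu_less_L
    by (cases "snorm (N + 2) G ?u = 0") (auto simp: mult_le_cancel_left_pos)
qed

lemma snorm_iterate_le:
  assumes feasible: "primal_feasible mu L R N h G f" and "i \<le> N"
  shows "snorm (N + 2) G (hvec N h (Some i)) \<le> \<bar>R\<bar> + (\<Sum>k<i. \<bar>h i k\<bar> * snorm (N + 2) G (uvec (Some k)))"
proof -
  have psd: "psd (N + 2) G" and "G (N + 1) (N + 1) \<le> R\<^sup>2"
    using feasible by (simp_all add: primal_feasible_iff)
  then have radius: "snorm (N + 2) G (uvec (Some (N + 1))) \<le> \<bar>R\<bar>"
    using real_sqrt_le_mono[of "G (N + 1) (N + 1)" "R\<^sup>2"] by (simp add: snorm_uvec)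
  have "snorm (N + 2) G (hvec N h (Some i))
      \<le> snorm (N + 2) G (uvec (Some (N + 1))) + snorm (N + 2) G (\<lambda>m. \<Sum>k<i. - h i k * uvec (Some k) m)"
    unfolding hvec_Some_eq[OF \<open>i \<le> N\<close>] by (rule snorm_add_le[OF psd])
  also have "\<dots> \<le> \<bar>R\<bar> + (\<Sum>k<i. \<bar>- h i k\<bar> * snorm (N + 2) G (uvec (Some k)))"
    using radius snorm_sum_le[OF psd, of "{..<i}" "\<lambda>k. - h i k" "\<lambda>k. uvec (Some k)"]
    by (intro add_mono) auto
  finally show ?thesis
    by simp
qed

lemma snorm_gradient_bounded:
  "i \<le> N \<Longrightarrow> \<exists>B. \<forall>G f. primal_feasible mu L R N h G f \<longrightarrow> snorm (N + 2) G (uvec (Some i)) \<le> B"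
proof (induction i rule: less_induct)
  case (less i)
  have "\<forall>k\<in>{..<i}. \<exists>B. \<forall>G f. primal_feasible mu L R N h G f \<longrightarrow> snorm (N + 2) G (uvec (Some k)) \<le> B"
    using less by simp
  then obtain \<beta> where \<beta>: "\<And>k G f. k < i \<Longrightarrow> primal_feasible mu L R N h G f
      \<Longrightarrow> snorm (N + 2) G (uvec (Some k)) \<le> \<beta> k"
    by (metis bchoice lessThan_iff)
  have "snorm (N + 2) G (uvec (Some i)) \<le> (L + mu) * (\<bar>R\<bar> + (\<Sum>k<i. \<bar>h i k\<bar> * \<beta> k))"
    if feasible: "primal_feasible mu L R N h G f" for G f
  proof -
    have "snorm (N + 2) G (uvec (Some i)) \<le> (L + mu) * snorm (N + 2) G (hvec N h (Some i))"
      using snorm_gradient_le[OF feasible less.prems] .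
    also have "\<dots> \<le> (L + mu) * (\<bar>R\<bar> + (\<Sum>k<i. \<bar>h i k\<bar> * \<beta> k))"
    proof -
      have "(\<Sum>k<i. \<bar>h i k\<bar> * snorm (N + 2) G (uvec (Some k))) \<le> (\<Sum>k<i. \<bar>h i k\<bar> * \<beta> k)"
        using \<beta>[OF _ feasible] by (intro sum_mono mult_left_mono) auto
      then show ?thesis
        using snorm_iterate_le[OF feasible less.prems] mu_nonneg mu_less_L by (intro mult_left_mono) auto
    qed
    finally show ?thesis .
  qed
  then show ?case by blast
qed

lemma primal_entries_bounded:
  "\<exists>D. \<forall>G f. primal_feasible mu L R N h G f \<longrightarrow> (\<forall>k<N + 2. \<forall>l<N + 2. \<bar>G k l\<bar> \<le> D)"
proof -
  obtain \<beta> where \<beta>: "\<And>i G f. i \<le> N \<Longrightarrow> primal_feasible mu L R N h G f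
      \<Longrightarrow> snorm (N + 2) G (uvec (Some i)) \<le> \<beta> i"
    using snorm_gradient_bounded by metis
  define D where "D = R\<^sup>2 + (\<Sum>i\<le>N. (\<beta> i)\<^sup>2)"
  have "\<bar>G k l\<bar> \<le> D" if feasible: "primal_feasible mu L R N h G f" and "k < N + 2" "l < N + 2"
    for G f k l
  proof -
    have psd: "psd (N + 2) G"
      using feasible by (simp add: primal_feasible_iff)
    have diag: "G m m \<le> D" if "m < N + 2" for m
    proof (cases "m \<le> N")
      case True
      have "G m m = (snorm (N + 2) G (uvec (Some m)))\<^sup>2"
        using psd_diag_nonneg[OF psd] that by (simp add: snorm_uvec)
      also have "\<dots> \<le> (\<beta> m)\<^sup>2"
        using \<beta>[OF True feasible] snorm_nonneg[OF psd] by (intro power_mono) auto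
      also have "\<dots> \<le> (\<Sum>i\<le>N. (\<beta> i)\<^sup>2)"
        using True by (intro member_le_sum) auto
      finally show ?thesis
        by (simp add: D_def add_increasing)
    next
      case False
      with that have "m = N + 1" by simp
      then show ?thesis
        using feasible by (simp add: primal_feasible_iff D_def add_increasing2 sum_nonneg)
    qed
    show ?thesis
      using psd_abs_entry_le[OF psd that(2,3)] diag[OF that(2)] diag[OF that(3)] by simp
  qed
  then show ?thesis by blast
qed

lemma primal_obj_bounded:
  "\<exists>B. \<forall>G f. primal_feasible mu L R N h G f \<longrightarrow> primal_obj N b C G f \<le> B"
proof -
  obtain D where D: "\<And>G f. primal_feasible mu L R N h G f \<Longrightarrow> \<forall>k<N + 2. \<forall>l<N + 2. \<bar>G k l\<bar> \<le> D"
    using primal_entries_bounded by blast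
  define size where "size P = (\<Sum>k<N + 2. \<Sum>l<N + 2. \<bar>P l k\<bar>)" for P :: "nat \<Rightarrow> nat \<Rightarrow> real"
  define M where "M i = size (Amat mu L N h (Some i) None) + size (Amat mu L N h None (Some i))" for i
  have "primal_obj N b C G f \<le> (\<Sum>i\<le>N. \<bar>b i\<bar> * (D * M i)) + D * size C"
    if feasible: "primal_feasible mu L R N h G f" for G f
  proof -
    have trace: "\<bar>trace_prod (N + 2) G P\<bar> \<le> D * size P" for P
      unfolding size_def by (rule abs_trace_prod_le[OF D[OF feasible]])
    have "b i * f i \<le> \<bar>b i\<bar> * (D * M i)" if "i \<le> N" for i
    proof -
      have "\<bar>f i\<bar> \<le> D * M i"
        using abs_fval_le[OF feasible that] trace[of "Amat mu L N h (Some i) None"]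
          trace[of "Amat mu L N h None (Some i)"]
        by (simp add: M_def distrib_left)
      then show ?thesis
        by (metis abs_ge_self abs_mult abs_ge_zero mult_left_mono order_trans)
    qed
    then have "(\<Sum>i\<le>N. b i * f i) \<le> (\<Sum>i\<le>N. \<bar>b i\<bar> * (D * M i))"
      by (intro sum_mono) auto
    moreover have "trace_prod (N + 2) C G \<le> D * size C"
      using trace[of C] by (simp add: trace_prod_commute[of _ C])
    ultimately show ?thesis
      by (simp add: primal_obj_def)
  qed
  then show ?thesis by blast
qed

end

section \<open>A strictly feasible point\<close>

text \<open>On the one-dimensional quadratic \<open>c x\<^sup>2 / 2\<close> the method produces the iterates
  \<open>x\<^sub>i = poly (iterate_poly h i) c * x\<^sub>0\<close>.\<close>

function iterate_poly :: "(nat \<Rightarrow> nat \<Rightarrow> real) \<Rightarrow> nat \<Rightarrow> real poly" where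
  "iterate_poly h i = 1 - pCons 0 (\<Sum>k<i. smult (h i k) (iterate_poly h k))"
  by auto
termination
  by (relation "Wellfounded.measure snd") auto

declare iterate_poly.simps [simp del]

lemma iterate_poly_nonzero: "iterate_poly h i \<noteq> 0"
proof -
  have "coeff (iterate_poly h i) 0 = 1"
    by (subst iterate_poly.simps) simp
  then show ?thesis by auto
qed

lemma degree_iterate_poly:
  assumes "\<forall>i. 1 \<le> i \<and> i \<le> N \<longrightarrow> h i (i - 1) \<noteq> 0" "i \<le> N"
  shows "degree (iterate_poly h i) = i"
  using assms(2)
proof (induction i rule: less_induct)
  case (less i)
  have coeff: "coeff (iterate_poly h i) (Suc m) = - (\<Sum>k<i. h i k * coeff (iterate_poly h k) m)" for m
    by (subst iterate_poly.simps) (simp add: coeff_sum)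
  show ?case
  proof (cases i)
    case 0
    then show ?thesis
      by (subst iterate_poly.simps) simp
  next
    case (Suc j)
    have degree_less: "degree (iterate_poly h k) = k" if "k < i" for k
      using less that by simp
    have high: "coeff (iterate_poly h i) (Suc m) = 0" if "m > j" for m
    proof -
      have "coeff (iterate_poly h k) m = 0" if "k < i" for k
        using degree_less[OF that] that \<open>m > j\<close> Suc by (intro coeff_eq_0) simp
      then show ?thesis
        by (simp add: coeff)
    qed
    have "\<forall>m>i. coeff (iterate_poly h i) m = 0"
    proof (intro allI impI)
      fix m assume "i < m"
      then obtain m' where "m = Suc m'" "j < m'"
        using Suc by (cases m) auto
      then show "coeff (iterate_poly h i) m = 0"
        using high by simp
    qed
    then have "degree (iterate_poly h i) \<le> i"
      by (rule degree_le)
    moreover have "(\<Sum>k<j. h i k * coeff (iterate_poly h k) j) = 0"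
      using degree_less Suc by (intro sum.neutral ballI) (simp add: coeff_eq_0)
    then have "coeff (iterate_poly h i) i = - h i j * lead_coeff (iterate_poly h j)"
      using coeff[of j] Suc degree_less[of j] by (simp add: lessThan_Suc)
    then have "coeff (iterate_poly h i) i \<noteq> 0"
      using Suc less.prems assms(1) iterate_poly_nonzero[of h j] by auto
    ultimately show ?thesis
      using le_degree[of "iterate_poly h i" i] by linarith
  qed
qed

lemma exists_curvature_separating_iterates:
  assumes "\<forall>i. 1 \<le> i \<and> i \<le> N \<longrightarrow> h i (i - 1) \<noteq> 0" "mu < L"
  shows "\<exists>c. mu < c \<and> c < L \<and> (\<forall>i\<le>N. poly (iterate_poly h i) c \<noteq> 0) \<and>
           (\<forall>i\<le>N. \<forall>j\<le>N. i \<noteq> j \<longrightarrow> poly (iterate_poly h i) c \<noteq> poly (iterate_poly h j) c)"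
proof -
  let ?P = "iterate_poly h"
  define D where "D = (\<Prod>i\<le>N. ?P i * (\<Prod>j\<in>{..N} - {i}. ?P i - ?P j))"
  have "?P i - ?P j \<noteq> 0" if "i \<le> N" "j \<le> N" "i \<noteq> j" for i j
  proof
    assume "?P i - ?P j = 0"
    then have "degree (?P i) = degree (?P j)" by simp
    then show False
      using degree_iterate_poly[where N = N and h = h, OF assms(1)] that by simp
  qed
  then have "D \<noteq> 0"
    unfolding D_def by (auto simp: prod_zero_iff iterate_poly_nonzero)
  then have "\<not> {mu<..<L} \<subseteq> {x. poly D x = 0}"
    using poly_roots_finite infinite_Ioo[OF assms(2)] finite_subset by blast
  then obtain c where "mu < c" "c < L" "poly D c \<noteq> 0"
    by (auto simp: subset_iff)
  then show ?thesis
    by (intro exI[of _ c]) (auto simp: D_def poly_prod prod_zero_iff)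
qed

lemma trace_prod_outer_Amat:
  assumes "(\<Sum>m<n. uvec i m * v m) = gi" "(\<Sum>m<n. uvec j m * v m) = gj"
    and "(\<Sum>m<n. hvec N h i m * v m) = xi" "(\<Sum>m<n. hvec N h j m * v m) = xj"
  shows "trace_prod n (outer v v) (Amat mu L N h i j) = (2 * L * gj * (xi - xj) + (gi - gj)\<^sup>2
      + 2 * mu * gi * (xj - xi) + L * mu * (xi - xj)\<^sup>2) / (2 * (L - mu))"
  unfolding trace_prod_Amat[OF psd_outer[unfolded psd_def, THEN conjunct1]]
    bform_diff_left bform_diff_right bform_outer assms
  by (simp add: power2_eq_square algebra_simps)

text \<open>The interpolation gap of the quadratic \<open>c x\<^sup>2 / 2\<close> between \<open>x\<^sub>i\<close> and \<open>x\<^sub>j\<close>; it is negative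
  when \<open>\<mu> < c < L\<close> and \<open>x\<^sub>i \<noteq> x\<^sub>j\<close>.\<close>

lemma quadratic_interp_gap:
  fixes c mu L xi xj :: real
  assumes "mu < L"
  shows "c * xj\<^sup>2 / 2 - c * xi\<^sup>2 / 2 + (2 * L * (c * xj) * (xi - xj) + (c * xi - c * xj)\<^sup>2
      + 2 * mu * (c * xi) * (xj - xi) + L * mu * (xi - xj)\<^sup>2) / (2 * (L - mu))
    = (xi - xj)\<^sup>2 * ((c - L) * (c - mu)) / (2 * (L - mu))"
  using assms by (simp add: field_simps power2_eq_square)

lemma slater_point:
  assumes "mu < L" "R > 0" "\<forall>i. 1 \<le> i \<and> i \<le> N \<longrightarrow> h i (i - 1) \<noteq> 0"
  shows "\<exists>G f. psd (N + 2) G \<and> (\<forall>i\<in>idx N. \<forall>j\<in>idx N. i \<noteq> j \<longrightarrow> interp_gap mu L N h G f i j < 0)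
     \<and> G (N + 1) (N + 1) < R\<^sup>2"
proof -
  obtain c where c: "mu < c" "c < L" "\<And>i. i \<le> N \<Longrightarrow> poly (iterate_poly h i) c \<noteq> 0"
    "\<And>i j. i \<le> N \<Longrightarrow> j \<le> N \<Longrightarrow> i \<noteq> j \<Longrightarrow> poly (iterate_poly h i) c \<noteq> poly (iterate_poly h j) c"
    using exists_curvature_separating_iterates[where N = N and h = h, OF assms(3,1)] by blast
  define x0 where "x0 = R / 2"
  define x where "x i = (case i of None \<Rightarrow> 0 | Some k \<Rightarrow> x0 * poly (iterate_poly h k) c)" for i
  define v where "v m = (if m \<le> N then c * x (Some m) else if m = N + 1 then x0 else 0)" for m
  define f where "f m = c * (x (Some m))\<^sup>2 / 2" for m
  have x_rec: "x (Some i) = x0 - (\<Sum>k<i. h i k * (c * x (Some k)))" for i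
    unfolding x_def by (subst iterate_poly.simps) (simp add: poly_sum algebra_simps sum_distrib_left)
  have gradient: "(\<Sum>m<N + 2. uvec i m * v m) = c * x i" if "i \<in> idx N" for i
  proof (cases i)
    case (Some k)
    then have "k \<le> N" using that by (auto simp: idx_def)
    have "(\<Sum>m<N + 2. uvec i m * v m) = (\<Sum>m<N + 2. if m = k then v k else 0)"
      by (rule sum.cong) (auto simp: Some uvec_def)
    then show ?thesis
      using \<open>k \<le> N\<close> by (simp add: Some v_def)
  qed (simp add: x_def)
  have iterate: "(\<Sum>m<N + 2. hvec N h i m * v m) = x i" if "i \<in> idx N" for i
  proof (cases i)
    case (Some k)
    then have "k \<le> N" using that by (auto simp: idx_def)
    have "(\<Sum>m<N + 2. hvec N h i m * v m)
        = (\<Sum>m<N + 2. uvec (Some (N + 1)) m * v m) + (\<Sum>j<k. - h k j * (\<Sum>m<N + 2. uvec (Some j) m * v m))"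
    proof -
      have "(\<Sum>m<N + 2. (\<Sum>j<k. - h k j * uvec (Some j) m) * v m)
          = (\<Sum>j<k. - h k j * (\<Sum>m<N + 2. uvec (Some j) m * v m))"
        unfolding sum_distrib_left sum_distrib_right by (subst sum.swap) (simp add: mult.assoc)
      then show ?thesis
        unfolding Some hvec_Some_eq[OF \<open>k \<le> N\<close>] distrib_right sum.distrib by simp
    qed
    also have "\<dots> = x0 - (\<Sum>j<k. h k j * (c * x (Some j)))"
    proof -
      have "(\<Sum>m<N + 2. uvec (Some (N + 1)) m * v m) = (\<Sum>m<N + 2. if m = N + 1 then x0 else 0)"
        by (rule sum.cong) (auto simp: uvec_def v_def)
      moreover have "(\<Sum>m<N + 2. uvec (Some j) m * v m) = c * x (Some j)" if "j < k" for j
        using gradient[of "Some j"] that \<open>k \<le> N\<close> by (simp add: idx_def)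
      ultimately show ?thesis
        by (simp add: sum_negf)
    qed
    finally show ?thesis
      by (simp add: Some x_rec[of k])
  qed (simp add: x_def)
  have distinct: "x i \<noteq> x j" if "i \<in> idx N" "j \<in> idx N" "i \<noteq> j" for i j
    using that c(3,4) \<open>R > 0\<close> by (cases i; cases j) (auto simp: x_def x0_def idx_def)
  have "interp_gap mu L N h (outer v v) f i j < 0" if "i \<in> idx N" "j \<in> idx N" "i \<noteq> j" for i j
  proof -
    have fval_eq: "fval f k = c * (x k)\<^sup>2 / 2" for k
      by (cases k) (simp_all add: fval_def f_def x_def)
    have "interp_gap mu L N h (outer v v) f i j = (x i - x j)\<^sup>2 * ((c - L) * (c - mu)) / (2 * (L - mu))"
      unfolding interp_gap_def fval_eq quadratic_interp_gap[OF assms(1), symmetric]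
        trace_prod_outer_Amat[OF gradient[OF that(1)] gradient[OF that(2)] iterate[OF that(1)]
          iterate[OF that(2)]] ..
    moreover have "0 < (x i - x j)\<^sup>2" "(c - L) * (c - mu) < 0"
      using distinct[OF that] c(1,2) by (auto simp: mult_neg_pos)
    ultimately show ?thesis
      using assms(1) by (simp add: divide_neg_pos mult_pos_neg)
  qed
  moreover have "outer v v (N + 1) (N + 1) < R\<^sup>2"
    using \<open>R > 0\<close> by (simp add: outer_def v_def x0_def power2_eq_square)
  ultimately show ?thesis
    by (intro exI[of _ "outer v v"] exI[of _ f] conjI psd_outer) auto
qed

section \<open>Strong duality\<close>

definition pair_comb :: "real \<Rightarrow> (nat \<Rightarrow> nat \<Rightarrow> real) \<times> (nat \<Rightarrow> real)
    \<Rightarrow> (nat \<Rightarrow> nat \<Rightarrow> real) \<times> (nat \<Rightarrow> real) \<Rightarrow> (nat \<Rightarrow> nat \<Rightarrow> real) \<times> (nat \<Rightarrow> real)" where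
  "pair_comb t q q' = ((\<lambda>k l. t * fst q k l + (1 - t) * fst q' k l), (\<lambda>m. t * snd q m + (1 - t) * snd q' m))"

lemma mix_closed_psd: "mix_closed {q. psd n (fst q)} pair_comb"
  by (simp add: mix_closed_def pair_comb_def psd_convex_comb)

lemma mix_affine_primal_obj: "mix_affine X pair_comb (\<lambda>q. primal_obj N b C (fst q) (snd q))"
proof -
  have sums: "(\<Sum>m\<le>N. b m * (t * f m + (1 - t) * f' m))
      = t * (\<Sum>m\<le>N. b m * f m) + (1 - t) * (\<Sum>m\<le>N. b m * f' m)"
    for t and f f' :: "nat \<Rightarrow> real"
  proof -
    have "(\<Sum>m\<le>N. b m * (t * f m + (1 - t) * f' m))
        = (\<Sum>m\<le>N. t * (b m * f m) + (1 - t) * (b m * f' m))"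
      by (rule sum.cong) (simp_all add: algebra_simps)
    then show ?thesis
      by (simp add: sum.distrib sum_distrib_left)
  qed
  show ?thesis
    unfolding mix_affine_def pair_comb_def primal_obj_def fst_conv snd_conv trace_prod_commute[of _ C]
      trace_prod_convex_comb sums
    by (simp add: algebra_simps)
qed

lemma mix_affine_interp_gap: "mix_affine X pair_comb (\<lambda>q. interp_gap mu L N h (fst q) (snd q) i j)"
  unfolding mix_affine_def pair_comb_def interp_gap_def fst_conv snd_conv trace_prod_convex_comb
    fval_convex_comb
  by (simp add: algebra_simps)

lemma mix_affine_radius: "mix_affine X pair_comb (\<lambda>q. fst q (N + 1) (N + 1) - R\<^sup>2)"
  by (simp add: mix_affine_def pair_comb_def algebra_simps)

text \<open>The diagonal constraints \<open>i = j\<close> are trivial and have no strictly feasible point, so the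
  multipliers are taken over the off-diagonal pairs only.\<close>

lemma lagrange_multipliers_primal:
  assumes "psd (N + 2) G0" and "\<forall>i\<in>idx N. \<forall>j\<in>idx N. i \<noteq> j \<longrightarrow> interp_gap mu L N h G0 f0 i j < 0"
    and "G0 (N + 1) (N + 1) < R\<^sup>2"
    and upper: "\<And>G f. primal_feasible mu L R N h G f \<Longrightarrow> primal_obj N b C G f \<le> p"
  shows "\<exists>lam tau. (\<forall>i\<in>idx N. \<forall>j\<in>idx N. 0 \<le> lam i j) \<and> 0 \<le> tau
    \<and> (\<forall>G f. psd (N + 2) G \<longrightarrow> lagrangian mu L R N h b C lam tau G f \<le> p)"
proof -
  define X :: "((nat \<Rightarrow> nat \<Rightarrow> real) \<times> (nat \<Rightarrow> real)) set" where "X = {q. psd (N + 2) (fst q)}"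
  define P where "P = {ij \<in> idx N \<times> idx N. fst ij \<noteq> snd ij}"
  define K where "K = insert None (Some ` P)"
  define g where "g k q = (case k of None \<Rightarrow> fst q (N + 1) (N + 1) - R\<^sup>2
      | Some ij \<Rightarrow> interp_gap mu L N h (fst q) (snd q) (fst ij) (snd ij))" for k q
  have "finite P"
    using finite_idx[of N] by (auto simp: P_def intro: finite_subset)
  then have "finite K"
    by (simp add: K_def)
  have affine: "\<forall>k\<in>K. mix_affine X pair_comb (g k)"
    using mix_affine_radius mix_affine_interp_gap by (auto simp: K_def g_def[abs_def])
  have x0: "(G0, f0) \<in> X"
    using assms(1) by (simp add: X_def)
  have strict: "\<forall>k\<in>K. g k (G0, f0) < 0"
    using assms(2,3) by (auto simp: K_def P_def g_def)
  have "primal_feasible mu L R N h (fst q) (snd q)" if "q \<in> X" "\<forall>k\<in>K. g k q \<le> 0" for q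
    using that by (auto simp: primal_feasible_iff_off_diagonal X_def K_def P_def g_def)
  then have "\<forall>q\<in>X. (\<forall>k\<in>K. g k q \<le> 0) \<longrightarrow> primal_obj N b C (fst q) (snd q) \<le> p"
    using upper by blast
  then obtain l where l: "\<forall>k\<in>K. 0 \<le> l k"
    and bound: "\<forall>q\<in>X. primal_obj N b C (fst q) (snd q) - (\<Sum>k\<in>K. l k * g k q) \<le> p"
    using lagrange_multipliers_affine[OF \<open>finite K\<close> mix_closed_psd[of "N + 2", folded X_def]
        mix_affine_primal_obj[of X N b C] affine x0 strict]
    by blast
  define lam where "lam i j = (if i \<noteq> j then l (Some (i, j)) else 0)" for i j
  define tau where "tau = l None"
  have multiplier_sum: "(\<Sum>k\<in>K. l k * g k q) = tau * (fst q (N + 1) (N + 1) - R\<^sup>2)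
      + (\<Sum>i\<in>idx N. \<Sum>j\<in>idx N. lam i j * interp_gap mu L N h (fst q) (snd q) i j)" for q
  proof -
    have "(\<Sum>k\<in>K. l k * g k q) = tau * g None q + (\<Sum>ij\<in>P. l (Some ij) * g (Some ij) q)"
      using \<open>finite P\<close> by (simp add: K_def tau_def sum.reindex)
    also have "(\<Sum>ij\<in>P. l (Some ij) * g (Some ij) q) = (\<Sum>ij\<in>idx N \<times> idx N. lam (fst ij) (snd ij) * g (Some ij) q)"
      by (rule sum.mono_neutral_cong_left) (auto simp: P_def lam_def finite_idx)
    finally show ?thesis
      by (simp add: g_def sum.cartesian_product split_def)
  qed
  have "lagrangian mu L R N h b C lam tau G f \<le> p" if "psd (N + 2) G" for G f
  proof -
    have "primal_obj N b C G f - (\<Sum>k\<in>K. l k * g k (G, f)) \<le> p"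
      using bound that by (simp add: X_def)
    then show ?thesis
      unfolding multiplier_sum lagrangian_def by simp
  qed
  moreover have "\<forall>i\<in>idx N. \<forall>j\<in>idx N. 0 \<le> lam i j" "0 \<le> tau"
    using l by (auto simp: lam_def tau_def K_def P_def)
  ultimately show ?thesis
    by blast
qed

lemma w_sdp_eq_SUP:
  assumes "primal_feasible mu L R N h G0 f0"
    and "\<And>G f. primal_feasible mu L R N h G f \<Longrightarrow> primal_obj N b C G f \<le> B"
  shows "w_sdp mu L R h N b C
    = ereal (SUP q\<in>{(G, f). primal_feasible mu L R N h G f}. primal_obj N b C (fst q) (snd q))"
proof -
  let ?F = "{(G, f). primal_feasible mu L R N h G f}"
  have "(SUP q\<in>?F. ereal (primal_obj N b C (fst q) (snd q))) \<le> ereal B"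
    using assms(2) by (intro SUP_least) auto
  moreover have "ereal (primal_obj N b C G0 f0) \<le> (SUP q\<in>?F. ereal (primal_obj N b C (fst q) (snd q)))"
    using assms(1) by (intro SUP_upper2[of "(G0, f0)"]) auto
  ultimately have "\<bar>SUP q\<in>?F. ereal (primal_obj N b C (fst q) (snd q))\<bar> \<noteq> \<infinity>"
    by auto
  then show ?thesis
    by (simp add: w_sdp_def ereal_SUP)
qed

theorem theorem6:
  fixes mu L R :: real and N :: nat and h :: "nat \<Rightarrow> nat \<Rightarrow> real"
    and b :: "nat \<Rightarrow> real" and C :: "nat \<Rightarrow> nat \<Rightarrow> real"
  assumes "0 \<le> mu" and "mu < L" and "N \<ge> 1" and "R > 0"
    and "\<forall>i k. 1 \<le> i \<and> i \<le> N \<and> i \<le> k \<and> k \<le> N - 1 \<longrightarrow> h i k = 0"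
    and "\<forall>i. 1 \<le> i \<and> i \<le> N \<longrightarrow> h i (i - 1) \<noteq> 0"
    and "sym_mat (N + 2) C"
  shows "\<exists>lam tau. dual_feasible mu L N h b C lam tau
           \<and> (\<forall>lam' tau'. dual_feasible mu L N h b C lam' tau' \<longrightarrow> tau * R\<^sup>2 \<le> tau' * R\<^sup>2)
           \<and> ereal (tau * R\<^sup>2) = w_sdp mu L R h N b C"
proof -
  let ?F = "{(G, f). primal_feasible mu L R N h G f}"
  define p where "p = (SUP q\<in>?F. primal_obj N b C (fst q) (snd q))"
  have feasible0: "primal_feasible mu L R N h (\<lambda>k l. 0) (\<lambda>m. 0)"
    by (simp add: primal_feasible_iff psd_zero interp_gap_def trace_prod_def fval_def split: option.split)
  obtain B where B: "\<And>G f. primal_feasible mu L R N h G f \<Longrightarrow> primal_obj N b C G f \<le> B"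
    using primal_obj_bounded[OF assms(1,2)] by blast
  have p_upper: "primal_obj N b C G f \<le> p" if "primal_feasible mu L R N h G f" for G f
    unfolding p_def using that B by (intro cSUP_upper2[of _ _ "(G, f)"] bdd_aboveI2) auto
  have p_least: "p \<le> tau' * R\<^sup>2" if "dual_feasible mu L N h b C lam' tau'" for lam' tau'
    unfolding p_def using feasible0 weak_duality[OF that] by (intro cSUP_least) auto
  obtain G0 f0 where "psd (N + 2) G0" "\<forall>i\<in>idx N. \<forall>j\<in>idx N. i \<noteq> j \<longrightarrow> interp_gap mu L N h G0 f0 i j < 0"
    "G0 (N + 1) (N + 1) < R\<^sup>2"
    using slater_point[where N = N and h = h, OF assms(2,4,6)] by blast
  from lagrange_multipliers_primal[OF this p_upper] obtain lam tau
    where dual: "dual_feasible mu L N h b C lam tau" and "tau * R\<^sup>2 \<le> p"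
    using dual_feasible_of_lagrangian_bound[OF assms(7)] by metis
  then have "tau * R\<^sup>2 = p"
    using p_least[OF dual] by simp
  then show ?thesis
    using dual p_least w_sdp_eq_SUP[OF feasible0 B, folded p_def] by auto
qed

end
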